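(* Let $A$ be a unital $C^*$-algebra, $N\ge2$, and let $P\in M_{N-1}(A)$ be a submagic matrix. The following are equivalent: (1) $P$ can be completed to a magic matrix $\widetilde P\in M_N(A)$ (i.e. one whose upper-left $(N-1)\times(N-1)$ block is $P$); (2) the elements $P_{iN}=1-\sum_{j=1}^{N-1}P_{ij}$, $i=1,\ldots,N-1$, are pairwise orthogonal projections; (3) the elements $P_{Nj}=1-\sum_{i=1}^{N-1}P_{ij}$, $j=1,\ldots,N-1$, are pairwise orthogonal projections; (4) the element $P_{NN}=\sum_{i,j=1}^{N-1}P_{ij}-(N-2)1$ is a projection.
   Context: A submagic matrix over $A$ is a square matrix whose entries are orthogonal projections ($p=p^2=p^*$), pairwise orthogonal within each row and within each column. It is magic if in addition the entries in each row and in each column sum to $1$. *)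

theory Defs
  imports "HOL-Analysis.Analysis"
begin

text \<open>The library has no complex-algebra class,
  so complex scalar multiplication is an extra operation compatible with the real one.\<close>

class unital_cstar_algebra = real_normed_algebra_1 + banach +
  fixes scaleC :: "complex \<Rightarrow> 'a \<Rightarrow> 'a"
    and star :: "'a \<Rightarrow> 'a"
  assumes scaleC_of_real: "scaleC (of_real r) x = scaleR r x"
    and scaleC_add_left: "scaleC (a + b) x = scaleC a x + scaleC b x"
    and scaleC_add_right: "scaleC a (x + y) = scaleC a x + scaleC a y"
    and scaleC_scaleC: "scaleC a (scaleC b x) = scaleC (a * b) x"
    and scaleC_mult_left: "scaleC a x * y = scaleC a (x * y)"
    and scaleC_mult_right: "x * scaleC a y = scaleC a (x * y)"
    and norm_scaleC: "norm (scaleC a x) = cmod a * norm x"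
    and star_star: "star (star x) = x"
    and star_add: "star (x + y) = star x + star y"
    and star_mult: "star (x * y) = star y * star x"
    and star_scaleC: "star (scaleC a x) = scaleC (cnj a) (star x)"
    and cstar_identity: "norm (star x * x) = (norm x)\<^sup>2"

definition projection :: "'a::unital_cstar_algebra \<Rightarrow> bool" where
  "projection p \<longleftrightarrow> p * p = p \<and> star p = p"

text \<open>Matrices in M_n(A) are functions nat => nat => A, indexed by {1..n}.\<close>

definition submagic :: "nat \<Rightarrow> (nat \<Rightarrow> nat \<Rightarrow> 'a::unital_cstar_algebra) \<Rightarrow> bool" where
  "submagic n P \<longleftrightarrow>
     (\<forall>i\<in>{1..n}. \<forall>j\<in>{1..n}. projection (P i j)) \<and>
     (\<forall>i\<in>{1..n}. \<forall>j\<in>{1..n}. \<forall>k\<in>{1..n}. j \<noteq> k \<longrightarrow> P i j * P i k = 0) \<and>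
     (\<forall>j\<in>{1..n}. \<forall>i\<in>{1..n}. \<forall>k\<in>{1..n}. i \<noteq> k \<longrightarrow> P i j * P k j = 0)"

definition magic :: "nat \<Rightarrow> (nat \<Rightarrow> nat \<Rightarrow> 'a::unital_cstar_algebra) \<Rightarrow> bool" where
  "magic n P \<longleftrightarrow> submagic n P \<and>
     (\<forall>i\<in>{1..n}. (\<Sum>j=1..n. P i j) = 1) \<and>
     (\<forall>j\<in>{1..n}. (\<Sum>i=1..n. P i j) = 1)"

end

theory Submission
  imports Defs
begin

text \<open>The row defects \<open>1 - \<Sum>\<^sub>j P\<^sub>i\<^sub>j\<close> are projections summing to \<open>1 - P\<^sub>N\<^sub>N\<close>, and so are the
  column defects. A finite family of projections is pairwise orthogonal iff its sum is a
  projection, which gives (2) \<open>\<longleftrightarrow>\<close> (4) \<open>\<longleftrightarrow>\<close> (3). By the same criterion a matrix of projections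
  with unit row and column sums is magic, so if \<open>P\<^sub>N\<^sub>N\<close> is a projection the matrix bordered by
  the defects is a magic completion; conversely any completion has the row defects as its last column.

  The hard half of the criterion is that orthogonality follows from the sum being a projection.
  Lacking an order on the algebra, we use norms: a self-adjoint \<open>a\<close> in a corner \<open>pAp\<close> with
  \<open>\<parallel>p \<plusminus> S a\<parallel> \<le> 1\<close> vanishes, because convexity, squaring and the C*-identity give
  \<open>\<parallel>p + \<lambda> a\<parallel> \<le> 1\<close> on a complex disc, and averaging the squares for \<open>\<lambda>\<close> and \<open>i\<lambda>\<close> enlarges
  the disc by \<open>\<surd>2\<close> indefinitely.\<close>

lemma star_zero [simp]: "star (0::'a::unital_cstar_algebra) = 0"
  by (metis add_cancel_right_right add_0 star_add)

lemma star_one [simp]: "star (1::'a::unital_cstar_algebra) = 1"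
  by (metis mult_1_right star_mult star_star)

lemma star_diff: "star (x - y::'a::unital_cstar_algebra) = star x - star y"
  by (metis diff_add_cancel eq_diff_eq star_add)

lemma star_sum: "star (sum (f::_ \<Rightarrow> 'a::unital_cstar_algebra) A) = (\<Sum>i\<in>A. star (f i))"
  by (induction A rule: infinite_finite_induct) (auto simp: star_add)

lemma scaleC_zero_left [simp]: "scaleC 0 (x::'a::unital_cstar_algebra) = 0"
  by (metis scaleC_of_real of_real_0 scaleR_zero_left)

lemma projection_one [simp]: "projection (1::'a::unital_cstar_algebra)"
  by (simp add: projection_def)

lemma projection_one_minus: "projection p \<Longrightarrow> projection (1 - p)"
  by (simp add: projection_def algebra_simps star_diff)

lemma projection_one_minus_iff: "projection (1 - p) \<longleftrightarrow> projection p"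
  using projection_one_minus[of p] projection_one_minus[of "1 - p"] by auto

lemma norm_projection_le_1:
  assumes "projection (p::'a::unital_cstar_algebra)"
  shows "norm p \<le> 1"
proof -
  have "(norm p)\<^sup>2 = norm p"
    using cstar_identity[of p] assms by (simp add: projection_def)
  then show ?thesis by (auto simp: power2_eq_square)
qed

lemma norm_mult_le_1:
  fixes x y :: "'a::real_normed_algebra"
  assumes "norm x \<le> 1" "norm y \<le> 1"
  shows "norm (x * y) \<le> 1"
  by (meson assms mult_le_one norm_ge_zero norm_mult_ineq order_trans)

lemma norm_convex_comb_le_1:
  fixes x y :: "'a::real_normed_vector"
  assumes "norm x \<le> 1" "norm y \<le> 1" "0 \<le> u" "0 \<le> v" "u + v = 1"
  shows "norm (u *\<^sub>R x + v *\<^sub>R y) \<le> 1"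
  using convexD[OF convex_cball[of 0 1], of x y u v] assms by simp

lemma norm_add_scaleR_le_1_between:
  fixes x y :: "'a::real_normed_vector"
  assumes "norm (x + S *\<^sub>R y) \<le> 1" "norm (x - S *\<^sub>R y) \<le> 1" "\<bar>t\<bar> \<le> S"
  shows "norm (x + t *\<^sub>R y) \<le> 1"
proof (cases "S = 0")
  case True
  then show ?thesis using assms by simp
next
  case False
  then have S: "S > 0" using assms(3) by linarith
  define u where "u = (S + t) / (2 * S)"
  have "(2 * u - 1) * S = t"
    using S by (simp add: u_def field_simps)
  then have "x + t *\<^sub>R y = u *\<^sub>R (x + S *\<^sub>R y) + (1 - u) *\<^sub>R (x - S *\<^sub>R y)"
    by (simp add: algebra_simps flip: scaleR_add_left)
  also have "norm \<dots> \<le> 1"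
    using assms S by (intro norm_convex_comb_le_1) (auto simp: u_def divide_simps)
  finally show ?thesis .
qed

lemma norm_projection_sub_compression_le_1:
  fixes p q :: "'a::unital_cstar_algebra"
  assumes p: "projection p" and q: "projection q" and s: "0 \<le> s" "s \<le> 1"
  shows "norm (p - s *\<^sub>R (p * q * p)) \<le> 1"
proof -
  have pp: "p * p = p" "star p = p" using p by (auto simp: projection_def)
  have q': "projection (1 - q)" using projection_one_minus[OF q] .
  have "star q = q" using q by (simp add: projection_def)
  have "star ((1 - q) * p) * ((1 - q) * p) = p * ((1 - q) * (1 - q)) * p"
    using pp \<open>star q = q\<close> by (simp add: star_mult star_diff mult.assoc)
  also have "\<dots> = p * (1 - q) * p"
    using q' by (simp add: projection_def)
  finally have "norm (p * (1 - q) * p) = (norm ((1 - q) * p))\<^sup>2"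
    using cstar_identity[of "(1 - q) * p"] by simp
  also have "\<dots> \<le> 1"
    using norm_mult_le_1[OF norm_projection_le_1[OF q'] norm_projection_le_1[OF p]]
    by (simp add: power_le_one)
  finally have "norm (p * (1 - q) * p) \<le> 1" .
  moreover have "p - s *\<^sub>R (p * q * p) = (1 - s) *\<^sub>R p + s *\<^sub>R (p * (1 - q) * p)"
    using pp by (simp add: algebra_simps)
  ultimately show ?thesis
    using norm_projection_le_1[OF p] s by (metis diff_add_cancel diff_ge_0_iff_ge norm_convex_comb_le_1)
qed

lemma corner_mult_expand_scaleR:
  fixes p a :: "'a::real_algebra_1"
  assumes "p * p = p" "p * a = a" "a * p = a"
  shows "(p + s *\<^sub>R a) * (p + t *\<^sub>R a) = p + (s + t) *\<^sub>R a + (s * t) *\<^sub>R (a * a)"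
  using assms by (simp add: algebra_simps)

lemma corner_mult_expand_scaleC:
  fixes p a :: "'a::unital_cstar_algebra"
  assumes "p * p = p" "p * a = a" "a * p = a"
  shows "(p + scaleC l a) * (p + scaleC m a) = p + scaleC (l + m) a + scaleC (l * m) (a * a)"
  using assms
  by (simp add: distrib_left distrib_right scaleC_mult_left scaleC_mult_right scaleC_scaleC
      scaleC_add_left scaleC_add_right mult.commute add.assoc)

lemma norm_corner_le_1_on_disc_doubled:
  fixes p a :: "'a::unital_cstar_algebra"
  assumes corner: "p * p = p" "p * a = a" "a * p = a"
    and R: "\<And>l. cmod l \<le> R \<Longrightarrow> norm (p + scaleC l a) \<le> 1" and m: "cmod m \<le> sqrt 2 * R"
  shows "norm (p + scaleC m a) \<le> 1"
proof -
  define l where "l = m / (1 + \<i>)"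
  have "cmod (1 + \<i>) = sqrt 2" by (simp add: cmod_def)
  then have "cmod l \<le> R" "cmod (\<i> * l) \<le> R"
    using m by (simp_all add: l_def norm_divide norm_mult field_simps)
  then have sq: "norm ((p + scaleC l a) * (p + scaleC l a)) \<le> 1"
    "norm ((p + scaleC (\<i> * l) a) * (p + scaleC (\<i> * l) a)) \<le> 1"
    using R norm_mult_le_1 by blast+
  have "m = (1 + \<i>) * l"
    by (simp add: l_def complex_eq_iff)
  then have lin: "l + l + (\<i> * l + \<i> * l) = of_real 2 * m" and quad: "l * l + \<i> * l * (\<i> * l) = 0"
    by (simp_all add: algebra_simps)
  \<comment> \<open>the two squares have opposite quadratic terms, so their average is linear in \<open>a\<close>\<close>
  have "(p + scaleC l a) * (p + scaleC l a) + (p + scaleC (\<i> * l) a) * (p + scaleC (\<i> * l) a)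
      = (p + p) + scaleC (l + l + (\<i> * l + \<i> * l)) a + scaleC (l * l + \<i> * l * (\<i> * l)) (a * a)"
    unfolding corner_mult_expand_scaleC[OF corner] scaleC_add_left by (simp only: add_ac)
  also have "\<dots> = 2 *\<^sub>R (p + scaleC m a)"
    unfolding lin quad scaleC_scaleC [symmetric] scaleC_of_real by (simp add: scaleR_2 scaleR_add_right)
  finally have "p + scaleC m a = (1/2) *\<^sub>R ((p + scaleC l a) * (p + scaleC l a))
      + (1/2) *\<^sub>R ((p + scaleC (\<i> * l) a) * (p + scaleC (\<i> * l) a))"
    by (metis scaleR_add_right scaleR_scaleR field_sum_of_halves scaleR_one
        nonzero_divide_eq_eq zero_neq_numeral)
  then show ?thesis
    using norm_convex_comb_le_1[OF sq] by simp
qed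

lemma corner_eq_0_if_norm_le_1_on_disc:
  fixes p a :: "'a::unital_cstar_algebra"
  assumes corner: "p * p = p" "p * a = a" "a * p = a"
    and r: "0 < r" and disc: "\<And>l. cmod l \<le> r \<Longrightarrow> norm (p + scaleC l a) \<le> 1"
  shows "a = 0"
proof (rule ccontr)
  assume "a \<noteq> 0"
  have discs: "norm (p + scaleC m a) \<le> 1" if "cmod m \<le> sqrt 2 ^ k * r" for k m
    using that
  proof (induction k arbitrary: m)
    case 0
    then show ?case using disc by simp
  next
    case (Suc k)
    then show ?case
      using norm_corner_le_1_on_disc_doubled[OF corner, of "sqrt 2 ^ k * r"] by (simp add: mult.assoc)
  qed
  obtain k where k: "2 / (r * norm a) < sqrt 2 ^ k"
    using real_arch_pow[of "sqrt 2"] by auto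
  define m where "m = complex_of_real (sqrt 2 ^ k * r)"
  have m: "cmod m = sqrt 2 ^ k * r"
    using r unfolding m_def norm_of_real by simp
  have "norm (scaleC m a) \<le> norm (p + scaleC m a) + norm p"
    using norm_triangle_ineq4[of "p + scaleC m a" p] by simp
  also have "\<dots> \<le> 2"
    using discs[of m k] discs[of 0 0] m r by simp
  finally have "sqrt 2 ^ k * (r * norm a) \<le> 2"
    by (simp add: norm_scaleC m mult.assoc)
  then show False
    using k r \<open>a \<noteq> 0\<close> by (simp add: field_simps)
qed

lemma norm_selfadjoint_corner_le_1_on_disc:
  fixes p a :: "'a::unital_cstar_algebra"
  assumes p: "projection p" and a: "star a = a" and corner: "p * a = a" "a * p = a"
    and S: "norm (p + S *\<^sub>R a) \<le> 1" "norm (p - S *\<^sub>R a) \<le> 1"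
    and l: "cmod l \<le> S / 4"
  shows "norm (p + scaleC l a) \<le> 1"
proof -
  have pp: "p * p = p" "star p = p" using p by (auto simp: projection_def)
  note expand = corner_mult_expand_scaleR[OF pp(1) corner]
  have "0 \<le> S" using l norm_ge_zero[of l] by linarith
  have line: "norm (p + t *\<^sub>R a) \<le> 1" if "\<bar>t\<bar> \<le> S" for t
    using norm_add_scaleR_le_1_between[OF S that] .
  have square: "norm (p + \<sigma> *\<^sub>R (a * a)) \<le> 1" if "0 \<le> \<sigma>" "\<sigma> \<le> S\<^sup>2" for \<sigma>
  proof -
    define t where "t = sqrt \<sigma>"
    have "\<bar>t\<bar> \<le> S" "t * t = \<sigma>"
      using that real_sqrt_le_mono[OF that(2)] \<open>0 \<le> S\<close> by (auto simp: t_def)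
    then have "p + \<sigma> *\<^sub>R (a * a)
        = (1/2) *\<^sub>R ((p + t *\<^sub>R a) * (p + t *\<^sub>R a)) + (1/2) *\<^sub>R ((p + (- t) *\<^sub>R a) * (p + (- t) *\<^sub>R a))"
      unfolding expand by (simp add: algebra_simps flip: scaleR_add_left)
    also have "norm \<dots> \<le> 1"
      using line[of t] line[of "- t"] \<open>\<bar>t\<bar> \<le> S\<close> by (intro norm_convex_comb_le_1 norm_mult_le_1) auto
    finally show ?thesis .
  qed
  have plane: "norm (p + s *\<^sub>R a + \<sigma> *\<^sub>R (a * a)) \<le> 1"
    if "\<bar>s\<bar> \<le> S / 2" "0 \<le> \<sigma>" "\<sigma> \<le> S\<^sup>2 / 2" for s \<sigma>
  proof -
    have "p + s *\<^sub>R a + \<sigma> *\<^sub>R (a * a)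
        = (1/2) *\<^sub>R (p + (2 * s) *\<^sub>R a) + (1/2) *\<^sub>R (p + (2 * \<sigma>) *\<^sub>R (a * a))"
      by (simp add: algebra_simps flip: scaleR_add_left)
    also have "norm \<dots> \<le> 1"
      using line[of "2 * s"] square[of "2 * \<sigma>"] that by (intro norm_convex_comb_le_1) auto
    finally show ?thesis .
  qed
  have "star (p + scaleC l a) = p + scaleC (cnj l) a"
    using pp a by (simp add: star_add star_scaleC)
  then have "star (p + scaleC l a) * (p + scaleC l a) = p + scaleC (cnj l + l) a + scaleC (cnj l * l) (a * a)"
    using corner_mult_expand_scaleC[OF pp(1) corner] by simp
  also have "\<dots> = p + (2 * Re l) *\<^sub>R a + (cmod l)\<^sup>2 *\<^sub>R (a * a)"
  proof -
    have "cnj l + l = of_real (2 * Re l)"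
      by (simp add: complex_add_cnj add.commute)
    moreover have "cnj l * l = of_real ((cmod l)\<^sup>2)"
      using complex_norm_square[of l] by (simp add: mult.commute)
    ultimately
    show ?thesis by (simp only: scaleC_of_real)
  qed
  finally have "(norm (p + scaleC l a))\<^sup>2 = norm (p + (2 * Re l) *\<^sub>R a + (cmod l)\<^sup>2 *\<^sub>R (a * a))"
    by (metis cstar_identity)
  also have "\<dots> \<le> 1"
  proof (rule plane)
    show "\<bar>2 * Re l\<bar> \<le> S / 2" using abs_Re_le_cmod[of l] l by linarith
    have "(cmod l)\<^sup>2 \<le> (S / 4)\<^sup>2" using l by (simp add: power_mono)
    then have "(cmod l)\<^sup>2 * 16 \<le> S\<^sup>2" by (simp add: power_divide)
    then show "(cmod l)\<^sup>2 \<le> S\<^sup>2 / 2"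
      using zero_le_power2[of "cmod l"] by linarith
  qed simp
  finally show ?thesis by (simp add: power_le_one_iff)
qed

lemma selfadjoint_corner_eq_0:
  fixes p a :: "'a::unital_cstar_algebra"
  assumes p: "projection p" and a: "star a = a" and corner: "p * a = a" "a * p = a"
    and S: "0 < S" "norm (p + S *\<^sub>R a) \<le> 1" "norm (p - S *\<^sub>R a) \<le> 1"
  shows "a = 0"
proof (rule corner_eq_0_if_norm_le_1_on_disc)
  show "p * p = p" using p by (simp add: projection_def)
  show "norm (p + scaleC l a) \<le> 1" if "cmod l \<le> S / 4" for l
    using norm_selfadjoint_corner_le_1_on_disc[OF p a corner S(2,3) that] .
qed (use corner S in auto)

text \<open>Order-free substitute for "a vanishing sum of positive elements has vanishing terms":
  for \<open>a = p f\<^sub>j p\<close> the hypothesis makes both \<open>p + S a\<close> and \<open>p - S a\<close> contractions.\<close>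

lemma projection_mult_eq_0_if_compressed_sum_eq_0:
  fixes p :: "'a::unital_cstar_algebra" and f :: "'i \<Rightarrow> 'a"
  assumes p: "projection p" and J: "finite J" "j \<in> J" and f: "\<forall>l\<in>J. projection (f l)"
    and zero: "p * sum f J * p = 0"
  shows "f j * p = 0"
proof -
  have pp: "p * p = p" "star p = p" using p by (auto simp: projection_def)
  have fj: "f j * f j = f j" "star (f j) = f j" using f J by (auto simp: projection_def)
  define a where "a = p * f j * p"
  define c where "c = card (J - {j})"
  define S where "S = 1 / (real c + 1)"
  have S: "0 < S" "S * (real c + 1) = 1" by (auto simp: S_def)
  have "(\<Sum>l\<in>J. p * f l * p) = 0"
    using zero by (simp add: sum_distrib_left sum_distrib_right mult.assoc)
  then have others: "(\<Sum>l\<in>J - {j}. p * f l * p) = - a"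
    using sum.remove[OF J, of "\<lambda>l. p * f l * p"] by (simp add: a_def eq_neg_iff_add_eq_0 add.commute)
  have "p + S *\<^sub>R a = S *\<^sub>R (p + (\<Sum>l\<in>J - {j}. p - p * f l * p))"
  proof -
    have "p + (\<Sum>l\<in>J - {j}. p - p * f l * p) = p + real c *\<^sub>R p + a"
      by (simp add: sum_subtractf others c_def scaleR_conv_of_real)
    then have "p + (\<Sum>l\<in>J - {j}. p - p * f l * p) = (real c + 1) *\<^sub>R p + a"
      by (simp add: algebra_simps)
    then show ?thesis
      using S by (simp add: scaleR_add_right)
  qed
  also have "norm \<dots> \<le> S * (1 + real c)"
  proof -
    have "norm (p + (\<Sum>l\<in>J - {j}. p - p * f l * p)) \<le> norm p + (\<Sum>l\<in>J - {j}. norm (p - p * f l * p))"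
      using norm_triangle_ineq[of p "\<Sum>l\<in>J - {j}. p - p * f l * p"] norm_sum[of "\<lambda>l. p - p * f l * p" "J - {j}"] by linarith
    also have "\<dots> \<le> 1 + (\<Sum>l\<in>J - {j}. 1)"
      using norm_projection_le_1[OF p] norm_projection_sub_compression_le_1[OF p, of _ 1] f
      by (intro add_mono sum_mono) auto
    finally show ?thesis
      using S by (simp add: c_def mult_left_mono)
  qed
  finally have "norm (p + S *\<^sub>R a) \<le> 1"
    using S by (simp add: algebra_simps)
  moreover have "norm (p - S *\<^sub>R a) \<le> 1"
    unfolding a_def using norm_projection_sub_compression_le_1[OF p] f J S
    by (simp add: S_def)
  moreover have "star a = a" "p * a = a" "a * p = a"
    using pp fj by (simp_all add: a_def star_mult mult.assoc flip: mult.assoc[of p p])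
  ultimately have "a = 0"
    using selfadjoint_corner_eq_0[OF p] S by blast
  moreover have "star (f j * p) * (f j * p) = a"
    using pp fj by (simp add: a_def star_mult mult.assoc flip: mult.assoc[of "f j" "f j"])
  ultimately show ?thesis
    using cstar_identity[of "f j * p"] by simp
qed

definition orthogonal_projections :: "'i set \<Rightarrow> ('i \<Rightarrow> 'a::unital_cstar_algebra) \<Rightarrow> bool" where
  "orthogonal_projections I e \<longleftrightarrow>
     (\<forall>i\<in>I. projection (e i)) \<and> (\<forall>i\<in>I. \<forall>k\<in>I. i \<noteq> k \<longrightarrow> e i * e k = 0)"

lemma projection_sum_if_orthogonal_projections:
  assumes I: "finite I" and e: "orthogonal_projections I e"
  shows "projection (sum e I)"
proof -
  have "e i * sum e I = e i" if i: "i \<in> I" for i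
  proof -
    have "e i * sum e I = e i * e i + (\<Sum>k\<in>I - {i}. e i * e k)"
      using sum.remove[OF I i] by (simp add: sum_distrib_left)
    moreover have "(\<Sum>k\<in>I - {i}. e i * e k) = 0"
      using e i by (intro sum.neutral) (auto simp: orthogonal_projections_def)
    ultimately show ?thesis
      using e i by (simp add: orthogonal_projections_def projection_def)
  qed
  then have "sum e I * sum e I = sum e I"
    by (simp add: sum_distrib_right)
  moreover have "star (sum e I) = sum e I"
    using e by (simp add: orthogonal_projections_def projection_def star_sum)
  ultimately show ?thesis
    by (simp add: projection_def)
qed

lemma orthogonal_projections_if_projection_sum:
  fixes e :: "'i \<Rightarrow> 'a::unital_cstar_algebra"
  assumes I: "finite I" and e: "\<forall>i\<in>I. projection (e i)" and sum: "projection (sum e I)"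
  shows "orthogonal_projections I e"
  unfolding orthogonal_projections_def
proof (intro conjI ballI impI)
  fix i k assume ik: "i \<in> I" "k \<in> I" "i \<noteq> k"
  \<comment> \<open>replacing \<open>e k\<close> by \<open>1 - sum e I\<close> gives a family of projections summing to \<open>1 - e k\<close>\<close>
  let ?f = "e(k := 1 - sum e I)"
  have "sum ?f (I - {k}) = sum e (I - {k})"
    by (intro sum.cong) auto
  then have "sum ?f I = 1 - sum e I + sum e (I - {k})"
    using sum.remove[OF I ik(2), of ?f] by simp
  also have "\<dots> = 1 - e k"
    using sum.remove[OF I ik(2), of e] by simp
  finally have "e k * sum ?f I * e k = 0"
    using e ik by (simp add: projection_def left_diff_distrib right_diff_distrib)
  then show "e i * e k = 0"
    using projection_mult_eq_0_if_compressed_sum_eq_0[of "e k" I i ?f] e sum ik I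
    by (simp add: projection_one_minus)
qed (use e in simp)

lemma submagic_iff_orthogonal_projections:
  "submagic n P \<longleftrightarrow>
     (\<forall>i\<in>{1..n}. orthogonal_projections {1..n} (P i)) \<and>
     (\<forall>j\<in>{1..n}. orthogonal_projections {1..n} (\<lambda>i. P i j))"
  unfolding submagic_def orthogonal_projections_def by blast

lemma magic_iff_projections_unit_sums:
  "magic n Q \<longleftrightarrow>
     (\<forall>i\<in>{1..n}. \<forall>j\<in>{1..n}. projection (Q i j)) \<and>
     (\<forall>i\<in>{1..n}. (\<Sum>j=1..n. Q i j) = 1) \<and> (\<forall>j\<in>{1..n}. (\<Sum>i=1..n. Q i j) = 1)"
  (is "_ \<longleftrightarrow> ?projections \<and> ?rows \<and> ?columns")
proof
  assume "magic n Q"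
  then show "?projections \<and> ?rows \<and> ?columns"
    by (simp add: magic_def submagic_def)
next
  assume *: "?projections \<and> ?rows \<and> ?columns"
  then have "\<forall>i\<in>{1..n}. orthogonal_projections {1..n} (Q i)"
    "\<forall>j\<in>{1..n}. orthogonal_projections {1..n} (\<lambda>i. Q i j)"
    by (auto intro!: orthogonal_projections_if_projection_sum)
  with * show "magic n Q"
    by (simp add: magic_def submagic_iff_orthogonal_projections)
qed

lemma submagic_transpose: "submagic n (\<lambda>i j. P j i) \<longleftrightarrow> submagic n P"
  unfolding submagic_def by blast

definition row_defect :: "nat \<Rightarrow> (nat \<Rightarrow> nat \<Rightarrow> 'a::unital_cstar_algebra) \<Rightarrow> nat \<Rightarrow> 'a" where
  "row_defect n P i = 1 - (\<Sum>j=1..n. P i j)"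

definition corner_defect :: "nat \<Rightarrow> (nat \<Rightarrow> nat \<Rightarrow> 'a::unital_cstar_algebra) \<Rightarrow> 'a" where
  "corner_defect n P = (\<Sum>i=1..n. \<Sum>j=1..n. P i j) - of_nat (n - 1)"

definition magic_completion :: "nat \<Rightarrow> (nat \<Rightarrow> nat \<Rightarrow> 'a::unital_cstar_algebra) \<Rightarrow> nat \<Rightarrow> nat \<Rightarrow> 'a" where
  "magic_completion n P i j =
     (if i \<le> n then if j \<le> n then P i j else row_defect n P i
      else if j \<le> n then row_defect n (\<lambda>i j. P j i) j else corner_defect n P)"

lemma corner_defect_transpose: "corner_defect n (\<lambda>i j. P j i) = corner_defect n P"
  unfolding corner_defect_def by (simp add: sum.swap [of "\<lambda>i j. P j i"])

lemma sum_row_defect: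
  assumes "1 \<le> n"
  shows "(\<Sum>i=1..n. row_defect n P i) = 1 - corner_defect n P"
  using assms by (simp add: row_defect_def corner_defect_def sum_subtractf of_nat_diff)

lemma projection_row_defect:
  assumes "submagic n P" "i \<in> {1..n}"
  shows "projection (row_defect n P i)"
  using assms projection_sum_if_orthogonal_projections[of "{1..n}" "P i"]
  by (simp add: row_defect_def submagic_iff_orthogonal_projections projection_one_minus)

lemma orthogonal_row_defects_iff_projection_corner_defect:
  assumes "submagic n P" "1 \<le> n"
  shows "orthogonal_projections {1..n} (row_defect n P) \<longleftrightarrow> projection (corner_defect n P)"
proof -
  have "sum (row_defect n P) {1..n} = 1 - corner_defect n P"
    using sum_row_defect[OF assms(2)] by simp
  then show ?thesis
    using projection_sum_if_orthogonal_projections[of "{1..n}" "row_defect n P"]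
      orthogonal_projections_if_projection_sum[of "{1..n}" "row_defect n P"]
      projection_row_defect[OF assms(1)]
    by (auto simp: projection_one_minus_iff)
qed

lemma magic_last_column_eq_row_defect:
  assumes "magic (Suc n) Q" "\<forall>i\<in>{1..n}. \<forall>j\<in>{1..n}. Q i j = P i j" "i \<in> {1..n}"
  shows "Q i (Suc n) = row_defect n P i"
proof -
  have "(\<Sum>j=1..n. Q i j) + Q i (Suc n) = 1"
    using assms(1,3) by (simp add: magic_def)
  moreover have "(\<Sum>j=1..n. Q i j) = (\<Sum>j=1..n. P i j)"
    using assms(2,3) by (intro sum.cong) auto
  ultimately show ?thesis
    by (simp add: row_defect_def eq_diff_eq add.commute)
qed

lemma magic_completion_transpose:
  "magic_completion n (\<lambda>i j. P j i) i j = magic_completion n P j i"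
  using corner_defect_transpose[of n P] by (simp add: magic_completion_def)

lemma magic_completion_row_sum:
  assumes "1 \<le> n" "i \<in> {1..Suc n}"
  shows "(\<Sum>j=1..Suc n. magic_completion n P i j) = 1"
proof (cases "i \<le> n")
  case True
  then show ?thesis by (simp add: magic_completion_def row_defect_def)
next
  case False
  have "(\<Sum>j=1..n. row_defect n (\<lambda>i j. P j i) j) = 1 - corner_defect n P"
    using sum_row_defect[OF assms(1), of "\<lambda>i j. P j i"] corner_defect_transpose[of n P] by simp
  then show ?thesis
    using False by (simp add: magic_completion_def)
qed

lemma magic_magic_completion:
  assumes P: "submagic n P" and n: "1 \<le> n" and corner: "projection (corner_defect n P)"
  shows "magic (Suc n) (magic_completion n P)"
  unfolding magic_iff_projections_unit_sums
proof (intro conjI ballI)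
  fix i j assume ij: "i \<in> {1..Suc n}" "j \<in> {1..Suc n}"
  have "submagic n (\<lambda>i j. P j i)"
    using P submagic_transpose by blast
  then have "j \<le> n \<Longrightarrow> projection (row_defect n (\<lambda>i j. P j i) j)"
    using ij by (intro projection_row_defect) auto
  moreover have "i \<le> n \<Longrightarrow> j \<le> n \<Longrightarrow> projection (P i j)"
    using P ij by (simp add: submagic_def)
  ultimately show "projection (magic_completion n P i j)"
    using ij corner projection_row_defect[OF P, of i] by (simp add: magic_completion_def)
next
  fix i assume "i \<in> {1..Suc n}"
  then show "(\<Sum>j=1..Suc n. magic_completion n P i j) = 1"
    using magic_completion_row_sum[OF n] by blast
next
  fix j assume "j \<in> {1..Suc n}"
  then show "(\<Sum>i=1..Suc n. magic_completion n P i j) = 1"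
    using magic_completion_row_sum[OF n, of j "\<lambda>i j. P j i"] magic_completion_transpose[of n P]
    by simp
qed

lemma completable_iff_projection_corner_defect:
  assumes P: "submagic n P" and n: "1 \<le> n"
  shows "(\<exists>Q. magic (Suc n) Q \<and> (\<forall>i\<in>{1..n}. \<forall>j\<in>{1..n}. Q i j = P i j))
    \<longleftrightarrow> projection (corner_defect n P)"
proof
  assume "\<exists>Q. magic (Suc n) Q \<and> (\<forall>i\<in>{1..n}. \<forall>j\<in>{1..n}. Q i j = P i j)"
  then obtain Q where Q: "magic (Suc n) Q" "\<forall>i\<in>{1..n}. \<forall>j\<in>{1..n}. Q i j = P i j"
    by blast
  then have "orthogonal_projections {1..n} (\<lambda>i. Q i (Suc n))"
    by (simp add: magic_def submagic_iff_orthogonal_projections orthogonal_projections_def)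
  then have "orthogonal_projections {1..n} (row_defect n P)"
    using magic_last_column_eq_row_defect[OF Q] by (simp add: orthogonal_projections_def)
  then show "projection (corner_defect n P)"
    using orthogonal_row_defects_iff_projection_corner_defect[OF P n] by blast
next
  assume "projection (corner_defect n P)"
  then show "\<exists>Q. magic (Suc n) Q \<and> (\<forall>i\<in>{1..n}. \<forall>j\<in>{1..n}. Q i j = P i j)"
    using magic_magic_completion[OF P n] by (auto simp: magic_completion_def)
qed

theorem proposition3p2:
  fixes P :: "nat \<Rightarrow> nat \<Rightarrow> 'a::unital_cstar_algebra" and N :: nat
  assumes "N \<ge> 2" and "submagic (N - 1) P"
  shows "let
      c1 = (\<exists>Q. magic N Q \<and> (\<forall>i\<in>{1..N-1}. \<forall>j\<in>{1..N-1}. Q i j = P i j));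
      r = (\<lambda>i. 1 - (\<Sum>j=1..N-1. P i j));
      c2 = ((\<forall>i\<in>{1..N-1}. projection (r i)) \<and>
            (\<forall>i\<in>{1..N-1}. \<forall>k\<in>{1..N-1}. i \<noteq> k \<longrightarrow> r i * r k = 0));
      c = (\<lambda>j. 1 - (\<Sum>i=1..N-1. P i j));
      c3 = ((\<forall>j\<in>{1..N-1}. projection (c j)) \<and>
            (\<forall>j\<in>{1..N-1}. \<forall>k\<in>{1..N-1}. j \<noteq> k \<longrightarrow> c j * c k = 0));
      c4 = projection ((\<Sum>i=1..N-1. \<Sum>j=1..N-1. P i j) - of_nat (N - 2))
    in (c1 \<longleftrightarrow> c2) \<and> (c1 \<longleftrightarrow> c3) \<and> (c1 \<longleftrightarrow> c4)"
proof -
  obtain n where N: "N = Suc n" and n: "1 \<le> n"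
    using assms(1) by (cases N) auto
  have P: "submagic n P" and P': "submagic n (\<lambda>i j. P j i)"
    using assms(2) submagic_transpose[of n P] by (simp_all add: N)
  have rows: "orthogonal_projections {1..n} (row_defect n P) \<longleftrightarrow> projection (corner_defect n P)"
    using orthogonal_row_defects_iff_projection_corner_defect[OF P n] .
  have columns: "orthogonal_projections {1..n} (row_defect n (\<lambda>i j. P j i)) \<longleftrightarrow> projection (corner_defect n P)"
    using orthogonal_row_defects_iff_projection_corner_defect[OF P' n] corner_defect_transpose[of n P] by simp
  have "N - 2 = n - 1"
    using N by simp
  then show ?thesis
    using rows columns completable_iff_projection_corner_defect[OF P n]
    unfolding Let_def N orthogonal_projections_def row_defect_def corner_defect_def by simp
qed

end
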